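(* Fix integers $d_1\ge 1$, $\tau\ge 1$, $T\ge 1$, set $d=1+\tau d_1$, and fix a node index $i\in\{1,\dots,d_1\}$. Let the binary time series $\{y^{(j)}_t\}$ follow the generalized linear model described in the context with true parameter $\theta^\star_i\in\Theta$, where $\Theta\subset[0,\infty)^d$ is convex and compact, and suppose the link function $g$ satisfies the standing assumption below. Let $\hat\theta_i\in\Theta$ be a weak solution of the variational inequality $\mathrm{VI}[F^{(i)}_T,\Theta]$. Then for every $\varepsilon\in(0,1)$, with probability at least $1-\varepsilon$, $$ m_g\,\lambda_1\,\|\hat\theta_i-\theta^\star_i\|_2\;\le\;\sqrt{\frac{d\,\log(2d/\varepsilon)}{T}},$$ where $\lambda_1$ is the smallest eigenvalue of $\mathbb{W}_{1:T}=\frac1T\sum_{t=1}^T w_{t-\tau:t-1}w_{t-\tau:t-1}^{\mathsf T}$. In particular, whenever $\lambda_1>0$, $\|\hat\theta_i-\theta^\star_i\|_2\le \frac{1}{m_g\lambda_1}\sqrt{\frac{d\log(2d/\varepsilon)}{T}}$.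
   Context: Data: for $j\in\{1,\dots,d_1\}$, binary values $y^{(j)}_t\in\{0,1\}$ for $t=1-\tau,\dots,T$, where the initial history $\{y^{(j)}_t: t=1-\tau,\dots,0\}$ is given (fixed). For $t\ge1$ define the vector $w_{t-\tau:t-1}=(1,y^{(1)}_{t-1},\dots,y^{(1)}_{t-\tau},\dots,y^{(d_1)}_{t-1},\dots,y^{(d_1)}_{t-\tau})^{\mathsf T}\in\{1\}\times\{0,1\}^{\tau d_1}\subset\mathbb{R}^d$. Let $\mathcal H_{t}$ be the $\sigma$-field generated by the initial history and all $y^{(j)}_s$, $s\le t$, $j=1,\dots,d_1$. Model: for $t=1,\dots,T$, conditionally on $\mathcal H_{t-1}$, $y^{(i)}_t$ is Bernoulli with $\mathbb P(y^{(i)}_t=1\mid\mathcal H_{t-1})=g(w_{t-\tau:t-1}^{\mathsf T}\theta^\star_i)$. Standing assumption on $g$: $g$ is defined on an interval $I\subset\mathbb R$ with values in $[0,1]$, such that $w^{\mathsf T}\theta\in I$ for all $\theta\in\Theta$ and all $w\in\{1\}\times\{0,1\}^{\tau d_1}$; $g$ is continuous, nondecreasing, differentiable on $I$ with $0<m_g\le g'(x)\le M_g$ for all $x\in I$. Empirical vector field: $F^{(i)}_T(\theta)=\frac1T\sum_{t=1}^T w_{t-\tau:t-1}\big(g(w_{t-\tau:t-1}^{\mathsf T}\theta)-y^{(i)}_t\big)$ for $\theta\in\Theta$. A weak solution of $\mathrm{VI}[F,\Theta]$ is a point $\hat\theta\in\Theta$ with $\langle F(\theta),\theta-\hat\theta\rangle\ge0$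 for all $\theta\in\Theta$. *)

theory Defs
  imports "HOL-Probability.Probability"
begin

text \<open>Coordinate k of the regressor w_{t-tau:t-1}, for k in 0..<1+tau*d1:
  k = 0 gives the intercept 1; k = 1 + (j-1)*tau + (l-1) (j in 1..d1, l in 1..tau)
  gives y^(j)_{t-l}.  The trajectory is yf j s (node j, time s).\<close>
definition wcoord :: "nat \<Rightarrow> (nat \<Rightarrow> int \<Rightarrow> real) \<Rightarrow> int \<Rightarrow> nat \<Rightarrow> real" where
  "wcoord \<tau> yf t k =
     (if k = 0 then 1 else yf ((k - 1) div \<tau> + 1) (t - int ((k - 1) mod \<tau> + 1)))"

text \<open>The regressor as a vector of real^'n, where ix enumerates the coordinates
  (a bijection from {..<d} to the index type 'n, d = 1 + tau*d1).\<close>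
definition wvec :: "(nat \<Rightarrow> 'n::finite) \<Rightarrow> nat \<Rightarrow> nat \<Rightarrow> (nat \<Rightarrow> int \<Rightarrow> real) \<Rightarrow> int \<Rightarrow> real ^ 'n" where
  "wvec ix d1 \<tau> yf t = (\<Sum>k<1 + \<tau> * d1. wcoord \<tau> yf t k *\<^sub>R axis (ix k) 1)"

definition FT :: "(real \<Rightarrow> real) \<Rightarrow> (nat \<Rightarrow> 'n::finite) \<Rightarrow> nat \<Rightarrow> nat \<Rightarrow> nat \<Rightarrow> nat
                   \<Rightarrow> (nat \<Rightarrow> int \<Rightarrow> real) \<Rightarrow> real ^ 'n \<Rightarrow> real ^ 'n" where
  "FT g ix d1 \<tau> T i yf \<theta> =
     (1 / real T) *\<^sub>R (\<Sum>t\<in>{1..int T}.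
        (g (wvec ix d1 \<tau> yf t \<bullet> \<theta>) - yf i t) *\<^sub>R wvec ix d1 \<tau> yf t)"

definition weak_VI_sol :: "('v::real_inner \<Rightarrow> 'v) \<Rightarrow> 'v set \<Rightarrow> 'v \<Rightarrow> bool" where
  "weak_VI_sol F \<Theta> \<theta>h \<longleftrightarrow> \<theta>h \<in> \<Theta> \<and> (\<forall>\<theta>\<in>\<Theta>. inner (F \<theta>) (\<theta> - \<theta>h) \<ge> 0)"

definition Wmat :: "(nat \<Rightarrow> 'n::finite) \<Rightarrow> nat \<Rightarrow> nat \<Rightarrow> nat \<Rightarrow> (nat \<Rightarrow> int \<Rightarrow> real) \<Rightarrow> real ^ 'n ^ 'n" where
  "Wmat ix d1 \<tau> T yf = (1 / real T) *\<^sub>R (\<Sum>t\<in>{1..int T}.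
      (\<chi> a b. wvec ix d1 \<tau> yf t $ a * wvec ix d1 \<tau> yf t $ b))"

definition eigenvalues :: "real ^ 'n ^ 'n \<Rightarrow> real set" where
  "eigenvalues A = {c. \<exists>v. v \<noteq> 0 \<and> A *v v = c *\<^sub>R v}"

definition min_eigenvalue :: "real ^ 'n ^ 'n \<Rightarrow> real" where
  "min_eigenvalue A = Min (eigenvalues A)"

end

theory Submission
  imports Defs
begin

text \<open>Writing \<open>\<Delta> = \<theta>\<^sub>h - \<theta>\<^sup>*\<close>, the field \<open>F\<close> is strongly monotone with modulus
  \<open>m\<^sub>g \<lambda>\<^sub>1\<close>: the mean value theorem gives \<open>(g a - g b)(a - b) \<ge> m\<^sub>g (a - b)\<^sup>2\<close>, and averaging
  \<open>(w\<^sub>t\<^sup>T\<Delta>)\<^sup>2\<close> over \<open>t\<close> is the quadratic form of \<open>W\<close>, bounded below by \<open>\<lambda>\<^sub>1 \<parallel>\<Delta>\<parallel>\<^sup>2\<close>.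
  Testing the weak variational inequality at the points \<open>\<theta>\<^sup>* + z \<Delta>\<close>, \<open>0 < z < 1\<close>, and letting
  \<open>z \<rightarrow> 1\<close> turns this into the deterministic bound \<open>m\<^sub>g \<lambda>\<^sub>1 \<parallel>\<Delta>\<parallel> \<le> \<parallel>F(\<theta>\<^sup>*)\<parallel>\<close>.

  Every coordinate of \<open>T F(\<theta>\<^sup>*)\<close> is a sum of martingale differences
  \<open>(g(w\<^sub>t\<^sup>T\<theta>\<^sup>*) - y\<^sub>t) w\<^sub>t\<^sub>,\<^sub>k\<close>, each a centred Bernoulli variable given the past. Conditioning on
  the (finitely many) possible histories and applying Hoeffding's lemma bounds its moment
  generating function by \<open>exp (T\<lambda>\<^sup>2/8)\<close>; Chernoff's bound and a union bound over the \<open>2d\<close>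
  signed coordinates then show that all coordinates are at most \<open>sqrt (log (2d/\<epsilon>) / T)\<close> with
  probability at least \<open>1 - \<epsilon>\<close>, i.e. \<open>\<parallel>F(\<theta>\<^sup>*)\<parallel> \<le> sqrt (d log (2d/\<epsilon>) / T)\<close>.\<close>

lemma sets_finite_range:
  assumes "finite (h ` space M)" "\<And>x. {\<omega>\<in>space M. h \<omega> = x} \<in> sets M"
  shows "{\<omega>\<in>space M. P (h \<omega>)} \<in> sets M"
proof -
  have "{\<omega>\<in>space M. P (h \<omega>)} = (\<Union>x\<in>{x\<in>h ` space M. P x}. {\<omega>\<in>space M. h \<omega> = x})"
    by auto
  also have "\<dots> \<in> sets M"
    using assms by (intro sets.finite_UN) auto
  finally show ?thesis .
qed

lemma sum_indicator_level_sets: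
  assumes "finite (h ` space M)" "\<omega> \<in> space M"
  shows "(\<Sum>x\<in>h ` space M. indicator {\<omega>\<in>space M. h \<omega> = x} \<omega> * f \<omega>) = (f \<omega> :: real)"
proof -
  have "(\<Sum>x\<in>h ` space M. indicator {\<omega>\<in>space M. h \<omega> = x} \<omega> * f \<omega>)
      = (\<Sum>x\<in>h ` space M. if h \<omega> = x then f \<omega> else 0)"
    using assms(2) by (intro sum.cong) (auto simp: indicator_def)
  also have "\<dots> = f \<omega>"
    using assms by (simp add: sum.delta)
  finally show ?thesis .
qed

lemma borel_measurable_finite_range:
  assumes "finite (h ` space M)" "\<And>x. {\<omega>\<in>space M. h \<omega> = x} \<in> sets M"
  shows "(\<lambda>\<omega>. f (h \<omega>) :: real) \<in> borel_measurable M"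
proof -
  have "(\<lambda>\<omega>. \<Sum>x\<in>h ` space M. indicator {\<omega>\<in>space M. h \<omega> = x} \<omega> * f x) \<in> borel_measurable M"
    using assms by measurable
  moreover have "(\<Sum>x\<in>h ` space M. indicator {\<omega>\<in>space M. h \<omega> = x} \<omega> * f x) = f (h \<omega>)"
    if "\<omega> \<in> space M" for \<omega>
  proof -
    have "(\<Sum>x\<in>h ` space M. indicator {\<omega>\<in>space M. h \<omega> = x} \<omega> * f x)
        = (\<Sum>x\<in>h ` space M. if h \<omega> = x then f (h \<omega>) else 0)"
      using that by (intro sum.cong) (auto simp: indicator_def)
    also have "\<dots> = f (h \<omega>)"
      using assms(1) that by (simp add: sum.delta)
    finally show ?thesis .
  qed
  ultimately show ?thesis
    by (rule measurable_cong[THEN iffD1, rotated]) simp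
qed

lemma integrable_finite_range:
  assumes "finite_measure M" "finite (h ` space M)" "\<And>x. {\<omega>\<in>space M. h \<omega> = x} \<in> sets M"
  shows "integrable M (\<lambda>\<omega>. f (h \<omega>) :: real)"
proof -
  interpret finite_measure M by fact
  show ?thesis
  proof (rule integrable_const_bound[where B="\<Sum>x\<in>h ` space M. \<bar>f x\<bar>"])
    show "AE \<omega> in M. norm (f (h \<omega>)) \<le> (\<Sum>x\<in>h ` space M. \<bar>f x\<bar>)"
      using member_le_sum[of _ "h ` space M" "\<lambda>x. \<bar>f x\<bar>"] assms(2) by (intro AE_I2) auto
    show "(\<lambda>\<omega>. f (h \<omega>)) \<in> borel_measurable M"
      by (rule borel_measurable_finite_range[OF assms(2,3)])
  qed
qed

lemma integral_finite_partition:
  fixes f :: "'a \<Rightarrow> real"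
  assumes "finite (h ` space M)" "\<And>x. {\<omega>\<in>space M. h \<omega> = x} \<in> sets M" "integrable M f"
  shows "integral\<^sup>L M f
    = (\<Sum>x\<in>h ` space M. LINT \<omega>|M. indicator {\<omega>\<in>space M. h \<omega> = x} \<omega> * f \<omega>)"
proof -
  have "integral\<^sup>L M f
      = integral\<^sup>L M (\<lambda>\<omega>. \<Sum>x\<in>h ` space M. indicator {\<omega>\<in>space M. h \<omega> = x} \<omega> * f \<omega>)"
    using sum_indicator_level_sets[OF assms(1)]
    by (intro Bochner_Integration.integral_cong) simp_all
  also have "\<dots> = (\<Sum>x\<in>h ` space M. LINT \<omega>|M. indicator {\<omega>\<in>space M. h \<omega> = x} \<omega> * f \<omega>)"
    using assms(2,3) integrable_mult_indicator[of _ M f]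
    by (intro Bochner_Integration.integral_sum) simp
  finally show ?thesis .
qed

section \<open>Hoeffding's lemma for a centred Bernoulli variable\<close>

lemma Hoeffdings_lemma_exp:
  fixes h p :: real
  assumes "h \<ge> 0" "0 \<le> p" "p \<le> 1"
  shows "exp (- h * p) * (1 + p * (exp h - 1)) \<le> exp (h\<^sup>2 / 8)"
proof -
  have pos: "1 + p * (exp h - 1) > 0"
    using assms by (intro add_pos_nonneg mult_nonneg_nonneg) auto
  have "ln (1 + p * (exp h - 1)) \<le> h\<^sup>2 / 8 + h * p"
    using Hoeffdings_lemma_aux[OF assms(1,2)] by simp
  hence "1 + p * (exp h - 1) \<le> exp (h\<^sup>2 / 8 + h * p)"
    using pos by (metis exp_le_cancel_iff exp_ln)
  hence "exp (- h * p) * (1 + p * (exp h - 1)) \<le> exp (- h * p) * exp (h\<^sup>2 / 8 + h * p)"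
    by (intro mult_left_mono) auto
  also have "\<dots> = exp (h\<^sup>2 / 8)"
    by (simp add: exp_add[symmetric])
  finally show ?thesis .
qed

text \<open>The left-hand side is \<open>E exp (l (p - Y) c)\<close> for \<open>Y\<close> Bernoulli with mean \<open>p\<close>.\<close>
lemma centred_bernoulli_mgf_le:
  fixes p c l :: real
  assumes "0 \<le> p" "p \<le> 1" "c \<in> {0, 1}"
  shows "p * exp (l * ((p - 1) * c)) + (1 - p) * exp (l * (p * c)) \<le> exp (l\<^sup>2 / 8)"
proof (cases "c = 0")
  case False
  hence c: "c = 1" using assms by auto
  show ?thesis
  proof (cases "l \<le> 0")
    case True
    have "p * exp (l * ((p - 1) * c)) + (1 - p) * exp (l * (p * c))
        = exp (- (- l) * p) * (1 + p * (exp (- l) - 1))"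
      using c by (simp add: algebra_simps exp_add[symmetric] exp_diff)
    also have "\<dots> \<le> exp ((- l)\<^sup>2 / 8)"
      using True assms by (intro Hoeffdings_lemma_exp) auto
    finally show ?thesis by simp
  next
    case False
    have "exp (l * p) = exp (- l * (1 - p)) * exp l"
      by (simp add: exp_add[symmetric] algebra_simps)
    hence "p * exp (l * ((p - 1) * c)) + (1 - p) * exp (l * (p * c))
        = exp (- l * (1 - p)) * (1 + (1 - p) * (exp l - 1))"
      using c by (simp add: algebra_simps)
    also have "\<dots> \<le> exp (l\<^sup>2 / 8)"
      using False assms by (intro Hoeffdings_lemma_exp) auto
    finally show ?thesis .
  qed
qed simp

section \<open>The smallest eigenvalue of a symmetric matrix\<close>

lemma nonneg_quadratic_linear_coeff_zero:
  fixes a b :: real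
  assumes "\<And>t. 0 \<le> 2 * t * a + t\<^sup>2 * b"
  shows "a = 0"
proof (rule ccontr)
  assume a: "a \<noteq> 0"
  show False
  proof (cases "b \<le> 0")
    case True
    have "0 \<le> 2 * (- a) * a + (- a)\<^sup>2 * b" by (rule assms)
    moreover have "(- a)\<^sup>2 * b \<le> 0" using True by (simp add: mult_nonneg_nonpos)
    moreover have "a\<^sup>2 > 0" using a by simp
    ultimately show False by (simp add: power2_eq_square)
  next
    case False
    have "0 \<le> 2 * (- a / b) * a + (- a / b)\<^sup>2 * b" by (rule assms)
    also have "\<dots> = - a\<^sup>2 / b" using False by (simp add: field_simps power2_eq_square)
    finally show False using a False by (simp add: divide_nonneg_pos field_simps)
  qed
qed

text \<open>Eigenvectors for distinct eigenvalues are orthogonal, hence independent, so there are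
  at most \<open>CARD('n)\<close> eigenvalues.\<close>
lemma finite_eigenvalues_symmetric:
  fixes A :: "real ^ 'n::finite ^ 'n"
  assumes sym: "\<And>x z. (A *v x) \<bullet> z = x \<bullet> (A *v z)"
  shows "finite (eigenvalues A)"
proof -
  define e where "e c = (SOME v. v \<noteq> 0 \<and> A *v v = c *\<^sub>R v)" for c
  have e: "e c \<noteq> 0 \<and> A *v e c = c *\<^sub>R e c" if "c \<in> eigenvalues A" for c
    using that unfolding e_def eigenvalues_def mem_Collect_eq by (rule someI_ex)
  have orth: "e c1 \<bullet> e c2 = 0"
    if "c1 \<in> eigenvalues A" "c2 \<in> eigenvalues A" "c1 \<noteq> c2" for c1 c2
  proof -
    have "c1 * (e c1 \<bullet> e c2) = (A *v e c1) \<bullet> e c2" using e[OF that(1)] by simp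
    also have "\<dots> = e c1 \<bullet> (A *v e c2)" by (rule sym)
    also have "\<dots> = c2 * (e c1 \<bullet> e c2)" using e[OF that(2)] by simp
    finally show ?thesis using that(3) by simp
  qed
  have "inj_on e (eigenvalues A)"
    by (rule inj_onI) (metis e orth inner_eq_zero_iff)
  moreover have "independent (e ` eigenvalues A)"
    using e orth by (intro pairwise_orthogonal_independent) (auto simp: pairwise_def orthogonal_def)
  ultimately show ?thesis
    using independent_bound finite_imageD by blast
qed

text \<open>A minimiser of the quadratic form on the unit sphere is an eigenvector: otherwise moving
  from it in the direction \<open>A v - \<mu> v\<close> would decrease the Rayleigh quotient.\<close>
lemma symmetric_eigenvalue_below_quadratic_form:
  fixes A :: "real ^ 'n::finite ^ 'n"
  assumes sym: "\<And>x z. (A *v x) \<bullet> z = x \<bullet> (A *v z)"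
  obtains \<mu> where "\<mu> \<in> eigenvalues A" "\<And>x. \<mu> * (norm x)\<^sup>2 \<le> x \<bullet> (A *v x)"
proof -
  define f where "f x = x \<bullet> (A *v x)" for x :: "real ^ 'n"
  have cont: "continuous_on (sphere 0 1) f"
    unfolding f_def
    by (intro continuous_intros matrix_vector_mult_linear_continuous_on[THEN continuous_on_compose2]) auto
  have "axis undefined 1 \<in> sphere (0 :: real ^ 'n) 1"
    by (simp add: norm_axis_1)
  then obtain v where v: "v \<in> sphere 0 1" "\<And>u. u \<in> sphere 0 1 \<Longrightarrow> f v \<le> f u"
    using continuous_attains_inf[OF compact_sphere _ cont] by blast
  define \<mu> where "\<mu> = f v"
  have fscale: "f (c *\<^sub>R x) = c\<^sup>2 * f x" for c x
    by (simp add: f_def matrix_vector_mult_scaleR power2_eq_square)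
  have below: "\<mu> * (norm x)\<^sup>2 \<le> f x" for x
  proof (cases "x = 0")
    case False
    have "\<mu> \<le> f ((1 / norm x) *\<^sub>R x)"
      unfolding \<mu>_def using False by (intro v(2)) simp
    also have "\<dots> = f x / (norm x)\<^sup>2"
      by (simp add: fscale power_divide)
    finally show ?thesis using False by (simp add: field_simps)
  qed (simp add: f_def)
  define z where "z = A *v v - \<mu> *\<^sub>R v"
  have expand: "f (v + t *\<^sub>R z) - \<mu> * (norm (v + t *\<^sub>R z))\<^sup>2
      = 2 * t * (z \<bullet> z) + t\<^sup>2 * (f z - \<mu> * (norm z)\<^sup>2)" for t
  proof -
    have vv: "v \<bullet> v = 1"
      using v(1) by (simp add: dot_square_norm)
    have "f (v + t *\<^sub>R z) = f v + 2 * t * (z \<bullet> (A *v v)) + t\<^sup>2 * f z"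
      unfolding f_def using sym[of v z]
      by (simp add: matrix_vector_right_distrib matrix_vector_mult_scaleR inner_add_left
          inner_add_right algebra_simps power2_eq_square sym[of z v] inner_commute)
    moreover have "(norm (v + t *\<^sub>R z))\<^sup>2 = 1 + 2 * t * (z \<bullet> v) + t\<^sup>2 * (norm z)\<^sup>2"
      unfolding power2_norm_eq_inner using vv by (simp add: inner_add_left inner_add_right inner_commute
          algebra_simps power2_eq_square)
    moreover have "z \<bullet> (A *v v) = z \<bullet> z + \<mu> * (z \<bullet> v)"
      by (simp add: z_def inner_diff_right)
    ultimately show ?thesis
      by (simp add: \<mu>_def algebra_simps)
  qed
  have "z \<bullet> z = 0"
    using below expand by (intro nonneg_quadratic_linear_coeff_zero[where b = "f z - \<mu> * (norm z)\<^sup>2"]) (metis diff_ge_0_iff_ge)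
  hence "A *v v = \<mu> *\<^sub>R v"
    by (simp add: z_def)
  moreover have "v \<noteq> 0"
    using v(1) by auto
  ultimately have "\<mu> \<in> eigenvalues A"
    unfolding eigenvalues_def by blast
  thus ?thesis
    using below unfolding f_def by (rule that)
qed

lemma min_eigenvalue_le_quadratic_form:
  fixes A :: "real ^ 'n::finite ^ 'n"
  assumes sym: "\<And>x z. (A *v x) \<bullet> z = x \<bullet> (A *v z)"
  shows "min_eigenvalue A * (norm x)\<^sup>2 \<le> x \<bullet> (A *v x)"
proof -
  obtain \<mu> where \<mu>: "\<mu> \<in> eigenvalues A" "\<And>x. \<mu> * (norm x)\<^sup>2 \<le> x \<bullet> (A *v x)"
    using symmetric_eigenvalue_below_quadratic_form[OF sym] by blast
  have "min_eigenvalue A \<le> \<mu>"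
    unfolding min_eigenvalue_def using finite_eigenvalues_symmetric[OF sym] \<mu>(1) by simp
  hence "min_eigenvalue A * (norm x)\<^sup>2 \<le> \<mu> * (norm x)\<^sup>2"
    by (simp add: mult_right_mono)
  also have "\<dots> \<le> x \<bullet> (A *v x)"
    by (rule \<mu>(2))
  finally show ?thesis .
qed

section \<open>Strong monotonicity and weak solutions of variational inequalities\<close>

lemma strongly_monotone_of_deriv_lower_bound:
  fixes g g' :: "real \<Rightarrow> real"
  assumes I: "is_interval I"
    and g': "\<And>x. x \<in> I \<Longrightarrow> (g has_real_derivative g' x) (at x within I)"
    and m: "\<And>x. x \<in> I \<Longrightarrow> m \<le> g' x"
    and xy: "x \<in> I" "y \<in> I"
  shows "m * (x - y)\<^sup>2 \<le> (g x - g y) * (x - y)"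
proof -
  have ordered: "m * (b - a) \<le> g b - g a" if "a \<in> I" "b \<in> I" "a \<le> b" for a b
  proof -
    have sub: "{a..b} \<subseteq> I"
      using mem_is_interval_1_I[OF I that(1,2)] by auto
    define h where "h u = g u - m * u" for u
    have "\<exists>c\<in>{a..b}. h b - h a = (\<lambda>u. (g' c - m) * u) (b - a)"
    proof (rule mvt_very_simple[OF that(3)])
      fix u assume "a \<le> u" "u \<le> b"
      hence "(g has_real_derivative g' u) (at u within {a..b})"
        using g' sub by (meson atLeastAtMost_iff has_field_derivative_subset subsetD)
      hence "(h has_real_derivative g' u - m) (at u within {a..b})"
        unfolding h_def by (rule DERIV_diff[OF _ DERIV_cmult_Id])
      thus "(h has_derivative (\<lambda>v. (g' u - m) * v)) (at u within {a..b})"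
        by (simp add: has_field_derivative_def mult_commute_abs)
    qed
    then obtain c where "c \<in> {a..b}" "h b - h a = (g' c - m) * (b - a)"
      by blast
    moreover have "0 \<le> (g' c - m) * (b - a)"
      using m[of c] sub \<open>c \<in> {a..b}\<close> that(3) by auto
    ultimately show ?thesis
      unfolding h_def by (simp add: algebra_simps)
  qed
  show ?thesis
  proof (cases "y \<le> x")
    case True
    with ordered[OF xy(2,1)] show ?thesis
      by (simp add: power2_eq_square mult_right_mono mult.assoc[symmetric])
  next
    case False
    with ordered[OF xy] have "m * (y - x) * (y - x) \<le> (g y - g x) * (y - x)"
      by (simp add: mult_right_mono)
    thus ?thesis
      by (simp add: power2_eq_square algebra_simps)
  qed
qed

text \<open>Testing the weak inequality at \<open>\<theta>\<^sub>s + z (\<theta>\<^sub>h - \<theta>\<^sub>s)\<close> gives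
  \<open>z c \<parallel>\<theta>\<^sub>h - \<theta>\<^sub>s\<parallel>\<^sup>2 \<le> - F \<theta>\<^sub>s \<bullet> (\<theta>\<^sub>h - \<theta>\<^sub>s)\<close> for every \<open>0 < z < 1\<close>.\<close>
lemma weak_VI_sol_dist_le:
  fixes F :: "'v::real_inner \<Rightarrow> 'v"
  assumes convex: "convex \<Theta>" and \<theta>s: "\<theta>s \<in> \<Theta>" and sol: "weak_VI_sol F \<Theta> \<theta>h"
    and strong: "\<And>\<theta>. \<theta> \<in> \<Theta> \<Longrightarrow> c * (norm (\<theta> - \<theta>s))\<^sup>2 \<le> (F \<theta> - F \<theta>s) \<bullet> (\<theta> - \<theta>s)"
  shows "c * norm (\<theta>h - \<theta>s) \<le> norm (F \<theta>s)"
proof -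
  define \<Delta> where "\<Delta> = \<theta>h - \<theta>s"
  have \<theta>h: "\<theta>h \<in> \<Theta>" and weak: "\<And>\<theta>. \<theta> \<in> \<Theta> \<Longrightarrow> 0 \<le> F \<theta> \<bullet> (\<theta> - \<theta>h)"
    using sol unfolding weak_VI_sol_def by auto
  have "c * (norm \<Delta>)\<^sup>2 \<le> - (F \<theta>s \<bullet> \<Delta>)"
  proof (rule field_le_mult_one_interval)
    fix z :: real assume z: "0 < z" "z < 1"
    define \<theta> where "\<theta> = \<theta>s + z *\<^sub>R \<Delta>"
    have "\<theta> = z *\<^sub>R \<theta>h + (1 - z) *\<^sub>R \<theta>s"
      by (simp add: \<theta>_def \<Delta>_def algebra_simps)
    hence "\<theta> \<in> \<Theta>"
      using convexD[OF convex \<theta>h \<theta>s] z by simp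
    have "\<theta> - \<theta>h = (z - 1) *\<^sub>R \<Delta>"
      by (simp add: \<theta>_def \<Delta>_def algebra_simps)
    hence "0 \<le> (z - 1) * (F \<theta> \<bullet> \<Delta>)"
      using weak[OF \<open>\<theta> \<in> \<Theta>\<close>] by simp
    hence toward: "F \<theta> \<bullet> \<Delta> \<le> 0"
      using z by (auto simp: zero_le_mult_iff)
    have "z * (z * (c * (norm \<Delta>)\<^sup>2)) = c * (norm (\<theta> - \<theta>s))\<^sup>2"
      using z by (simp add: \<theta>_def power_mult_distrib power2_eq_square)
    also have "\<dots> \<le> (F \<theta> - F \<theta>s) \<bullet> (\<theta> - \<theta>s)"
      by (rule strong[OF \<open>\<theta> \<in> \<Theta>\<close>])
    also have "\<dots> = z * (F \<theta> \<bullet> \<Delta> - F \<theta>s \<bullet> \<Delta>)"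
      by (simp add: \<theta>_def inner_diff_left)
    finally have "z * (c * (norm \<Delta>)\<^sup>2) \<le> F \<theta> \<bullet> \<Delta> - F \<theta>s \<bullet> \<Delta>"
      using z by simp
    with toward show "z * (c * (norm \<Delta>)\<^sup>2) \<le> - (F \<theta>s \<bullet> \<Delta>)"
      by simp
  qed
  also have "\<dots> \<le> norm (F \<theta>s) * norm \<Delta>"
    using norm_cauchy_schwarz[of "F \<theta>s" "- \<Delta>"] by simp
  finally have "(c * norm \<Delta>) * norm \<Delta> \<le> norm (F \<theta>s) * norm \<Delta>"
    by (simp add: power2_eq_square mult.assoc)
  thus ?thesis
    unfolding \<Delta>_def[symmetric] by (cases "norm \<Delta> = 0") (simp_all add: mult_le_cancel_right)
qed

lemma norm_le_sqrt_card_mult: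
  fixes v :: "real ^ 'n::finite"
  assumes "\<And>j. \<bar>v $ j\<bar> \<le> \<sigma>"
  shows "norm v \<le> sqrt (real CARD('n) * \<sigma>\<^sup>2)"
proof -
  have sq: "(v $ j)\<^sup>2 \<le> \<sigma>\<^sup>2" for j
    using power_mono[OF assms abs_ge_zero, of j 2] by simp
  have "v \<bullet> v = (\<Sum>j\<in>UNIV. (v $ j)\<^sup>2)"
    by (simp add: inner_vec_def power2_eq_square)
  also have "\<dots> \<le> (\<Sum>j\<in>(UNIV :: 'n set). \<sigma>\<^sup>2)"
    using sq by (intro sum_mono)
  also have "\<dots> = real CARD('n) * \<sigma>\<^sup>2"
    by simp
  finally show ?thesis
    by (simp add: norm_eq_sqrt_inner)
qed

lemma wvec_component:
  assumes "inj_on ix {..<1 + \<tau> * d1}" "k < 1 + \<tau> * d1"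
  shows "wvec ix d1 \<tau> yf t $ ix k = wcoord \<tau> yf t k"
proof -
  have "wvec ix d1 \<tau> yf t $ ix k = (\<Sum>k'<1 + \<tau> * d1. if k' = k then wcoord \<tau> yf t k' else 0)"
    unfolding wvec_def sum_component
    using assms by (intro sum.cong) (auto simp: axis_def inj_on_def)
  also have "\<dots> = wcoord \<tau> yf t k"
    using assms(2) by simp
  finally show ?thesis .
qed

lemma wcoord_lag_index:
  assumes "\<tau> \<ge> 1" "1 \<le> k" "k < 1 + \<tau> * d1"
  shows "(k - 1) div \<tau> + 1 \<in> {1..d1}" "t - int \<tau> \<le> t - int ((k - 1) mod \<tau> + 1)"
proof -
  have "(k - 1) div \<tau> < d1"
    using assms by (simp add: div_less_iff_less_mult mult.commute)
  thus "(k - 1) div \<tau> + 1 \<in> {1..d1}" by simp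
  have "(k - 1) mod \<tau> < \<tau>"
    using assms by simp
  thus "t - int \<tau> \<le> t - int ((k - 1) mod \<tau> + 1)" by simp
qed

lemma wvec_cong:
  assumes "\<tau> \<ge> 1"
    and "\<And>j s. j \<in> {1..d1} \<Longrightarrow> t - int \<tau> \<le> s \<Longrightarrow> s \<le> t - 1 \<Longrightarrow> yf j s = yf' j s"
  shows "wvec ix d1 \<tau> yf t = wvec ix d1 \<tau> yf' t"
  unfolding wvec_def
proof (intro sum.cong refl)
  fix k assume "k \<in> {..<1 + \<tau> * d1}"
  then show "wcoord \<tau> yf t k *\<^sub>R axis (ix k) 1 = wcoord \<tau> yf' t k *\<^sub>R axis (ix k) 1"
    using wcoord_lag_index(1)[OF assms(1), of k d1] wcoord_lag_index(2)[OF assms(1), of k d1 t] assms(2)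
    by (cases "k = 0") (auto simp: wcoord_def)
qed

lemma wvec_binary:
  assumes "\<tau> \<ge> 1" "inj_on ix {..<1 + \<tau> * d1}"
    and "\<And>j s. j \<in> {1..d1} \<Longrightarrow> t - int \<tau> \<le> s \<Longrightarrow> s \<le> t - 1 \<Longrightarrow> yf j s \<in> {0, 1}"
  shows "wvec ix d1 \<tau> yf t $ ix 0 = 1"
    and "k \<in> {1..<1 + \<tau> * d1} \<Longrightarrow> wvec ix d1 \<tau> yf t $ ix k \<in> {0, 1}"
  using wvec_component[OF assms(2)] wcoord_lag_index(1)[OF assms(1), of k d1] wcoord_lag_index(2)[OF assms(1), of k d1 t] assms(3)
  by (auto simp: wcoord_def)

lemma Wmat_mult:
  "Wmat ix d1 \<tau> T yf *v x
     = (1 / real T) *\<^sub>R (\<Sum>t\<in>{1..int T}. (wvec ix d1 \<tau> yf t \<bullet> x) *\<^sub>R wvec ix d1 \<tau> yf t)"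
proof (subst vec_eq_iff, intro allI)
  fix a
  let ?w = "wvec ix d1 \<tau> yf"
  have "(Wmat ix d1 \<tau> T yf *v x) $ a
      = (\<Sum>b\<in>UNIV. (1 / real T) * (\<Sum>t\<in>{1..int T}. ?w t $ a * ?w t $ b) * x $ b)"
    by (simp add: Wmat_def matrix_vector_mult_def)
  also have "\<dots> = (1 / real T) * (\<Sum>t\<in>{1..int T}. \<Sum>b\<in>UNIV. ?w t $ a * ?w t $ b * x $ b)"
    by (simp add: sum_distrib_left sum_distrib_right mult.assoc) (rule sum.swap)
  also have "\<dots> = (1 / real T) * (\<Sum>t\<in>{1..int T}. (?w t \<bullet> x) * ?w t $ a)"
    by (simp add: inner_vec_def sum_distrib_left sum_distrib_right mult.commute mult.left_commute)
  finally show "(Wmat ix d1 \<tau> T yf *v x) $ a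
      = ((1 / real T) *\<^sub>R (\<Sum>t\<in>{1..int T}. (?w t \<bullet> x) *\<^sub>R ?w t)) $ a"
    by simp
qed

lemma Wmat_inner:
  "(Wmat ix d1 \<tau> T yf *v x) \<bullet> z
     = (1 / real T) * (\<Sum>t\<in>{1..int T}. (wvec ix d1 \<tau> yf t \<bullet> x) * (wvec ix d1 \<tau> yf t \<bullet> z))"
  by (simp add: Wmat_mult inner_sum_left)

lemma Wmat_symmetric: "(Wmat ix d1 \<tau> T yf *v x) \<bullet> z = x \<bullet> (Wmat ix d1 \<tau> T yf *v z)"
  by (simp add: Wmat_inner inner_commute[of x] mult.commute)

lemma Wmat_quadratic_form:
  "x \<bullet> (Wmat ix d1 \<tau> T yf *v x) = (1 / real T) * (\<Sum>t\<in>{1..int T}. (wvec ix d1 \<tau> yf t \<bullet> x)\<^sup>2)"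
  by (simp add: Wmat_symmetric[symmetric] Wmat_inner power2_eq_square)

section \<open>The deterministic error bound\<close>

locale glm =
  fixes d1 \<tau> T i :: nat and ix :: "nat \<Rightarrow> 'n::finite" and \<theta>s :: "real ^ 'n"
    and \<Theta> :: "(real ^ 'n) set" and g g' :: "real \<Rightarrow> real" and I :: "real set" and mg :: real
  assumes tau: "\<tau> \<ge> 1" and T: "T \<ge> 1" and i: "i \<in> {1..d1}"
    and ix: "bij_betw ix {..<1 + \<tau> * d1} UNIV"
    and Theta_convex: "convex \<Theta>"
    and theta_star: "\<theta>s \<in> \<Theta>"
    and I_interval: "is_interval I"
    and g_range: "\<forall>x\<in>I. 0 \<le> g x \<and> g x \<le> 1"
    and g_in_I: "\<forall>\<theta>\<in>\<Theta>. \<forall>w. (w $ ix 0 = 1 \<and> (\<forall>k\<in>{1..<1 + \<tau> * d1}. w $ ix k \<in> {0, 1}))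
                    \<longrightarrow> w \<bullet> \<theta> \<in> I"
    and g_deriv: "\<forall>x\<in>I. (g has_real_derivative g' x) (at x within I)"
    and mg_pos: "0 < mg"
    and g'_lower: "\<forall>x\<in>I. mg \<le> g' x"
begin

abbreviation w :: "(nat \<Rightarrow> int \<Rightarrow> real) \<Rightarrow> int \<Rightarrow> real ^ 'n" where
  "w \<equiv> wvec ix d1 \<tau>"

abbreviation F :: "(nat \<Rightarrow> int \<Rightarrow> real) \<Rightarrow> real ^ 'n \<Rightarrow> real ^ 'n" where
  "F \<equiv> FT g ix d1 \<tau> T i"

abbreviation W :: "(nat \<Rightarrow> int \<Rightarrow> real) \<Rightarrow> real ^ 'n ^ 'n" where
  "W \<equiv> Wmat ix d1 \<tau> T"

definition binary :: "(nat \<Rightarrow> int \<Rightarrow> real) \<Rightarrow> bool" where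
  "binary yf \<longleftrightarrow> (\<forall>j\<in>{1..d1}. \<forall>t\<in>{1 - int \<tau>..int T}. yf j t \<in> {0, 1})"

lemma ix_inj: "inj_on ix {..<1 + \<tau> * d1}"
  using ix bij_betw_def by blast

lemma card_index_type: "CARD('n) = 1 + \<tau> * d1"
  using bij_betw_same_card[OF ix] by simp

lemma binary_lags:
  assumes "binary yf" "t \<in> {1..int T}" "j \<in> {1..d1}" "t - int \<tau> \<le> s" "s \<le> t - 1"
  shows "yf j s \<in> {0, 1}"
  using assms unfolding binary_def by auto

lemma w_binary:
  assumes "binary yf" "t \<in> {1..int T}"
  shows "w yf t $ ix 0 = 1" "k \<in> {1..<1 + \<tau> * d1} \<Longrightarrow> w yf t $ ix k \<in> {0, 1}"
  using wvec_binary[OF tau ix_inj, where t = t and yf = yf] binary_lags[OF assms] by blast+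

lemma w_component_binary:
  assumes "binary yf" "t \<in> {1..int T}"
  shows "w yf t $ j \<in> {0, 1}"
proof -
  obtain k where k: "k < 1 + \<tau> * d1" "j = ix k"
    using bij_betw_imp_surj_on[OF ix] by (metis UNIV_I imageE lessThan_iff)
  show ?thesis
    using w_binary[OF assms] k by (cases "k = 0") auto
qed

lemma w_inner_in_I:
  assumes "binary yf" "t \<in> {1..int T}" "\<theta> \<in> \<Theta>"
  shows "w yf t \<bullet> \<theta> \<in> I"
  using g_in_I assms(3) w_binary[OF assms(1,2)] by blast

lemma F_diff_inner:
  "(F yf \<theta> - F yf \<theta>') \<bullet> z
     = (1 / real T) * (\<Sum>t\<in>{1..int T}. (g (w yf t \<bullet> \<theta>) - g (w yf t \<bullet> \<theta>')) * (w yf t \<bullet> z))"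
proof -
  have "(F yf \<theta> - F yf \<theta>') \<bullet> z = (1 / real T) * (\<Sum>t\<in>{1..int T}.
      (g (w yf t \<bullet> \<theta>) - yf i t) * (w yf t \<bullet> z) - (g (w yf t \<bullet> \<theta>') - yf i t) * (w yf t \<bullet> z))"
    by (simp add: FT_def inner_diff_left inner_sum_left right_diff_distrib sum_subtractf)
  also have "\<dots> = (1 / real T) * (\<Sum>t\<in>{1..int T}. (g (w yf t \<bullet> \<theta>) - g (w yf t \<bullet> \<theta>')) * (w yf t \<bullet> z))"
    by (simp add: algebra_simps)
  finally show ?thesis .
qed

lemma F_strongly_monotone:
  assumes "binary yf" "\<theta> \<in> \<Theta>"
  shows "mg * min_eigenvalue (W yf) * (norm (\<theta> - \<theta>s))\<^sup>2 \<le> (F yf \<theta> - F yf \<theta>s) \<bullet> (\<theta> - \<theta>s)"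
proof -
  have "mg * min_eigenvalue (W yf) * (norm (\<theta> - \<theta>s))\<^sup>2 \<le> mg * ((\<theta> - \<theta>s) \<bullet> (W yf *v (\<theta> - \<theta>s)))"
    using min_eigenvalue_le_quadratic_form[OF Wmat_symmetric] mg_pos by (simp add: mult.assoc)
  also have "\<dots> = (1 / real T) * (\<Sum>t\<in>{1..int T}. mg * (w yf t \<bullet> \<theta> - w yf t \<bullet> \<theta>s)\<^sup>2)"
    by (simp add: Wmat_quadratic_form sum_distrib_left inner_diff_right)
  also have "\<dots> \<le> (1 / real T)
      * (\<Sum>t\<in>{1..int T}. (g (w yf t \<bullet> \<theta>) - g (w yf t \<bullet> \<theta>s)) * (w yf t \<bullet> \<theta> - w yf t \<bullet> \<theta>s))"
    using I_interval g_deriv g'_lower w_inner_in_I[OF assms(1) _ assms(2)] w_inner_in_I[OF assms(1) _ theta_star]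
    by (intro mult_left_mono sum_mono strongly_monotone_of_deriv_lower_bound[where g' = g' and I = I]) auto
  also have "\<dots> = (F yf \<theta> - F yf \<theta>s) \<bullet> (\<theta> - \<theta>s)"
    by (subst F_diff_inner) (simp only: inner_diff_right)
  finally show ?thesis .
qed

lemma weak_VI_sol_error_le:
  assumes "binary yf" "weak_VI_sol (F yf) \<Theta> \<theta>h"
  shows "mg * min_eigenvalue (W yf) * norm (\<theta>h - \<theta>s) \<le> norm (F yf \<theta>s)"
  using Theta_convex theta_star assms(2) F_strongly_monotone[OF assms(1)] by (rule weak_VI_sol_dist_le)

definition noise_sum :: "'n \<Rightarrow> (nat \<Rightarrow> int \<Rightarrow> real) \<Rightarrow> int \<Rightarrow> real" where
  "noise_sum j yf t = (\<Sum>u\<in>{1..t}. (g (w yf u \<bullet> \<theta>s) - yf i u) * w yf u $ j)"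

lemma F_component: "F yf \<theta>s $ j = noise_sum j yf (int T) / real T"
  by (simp add: FT_def noise_sum_def)

lemma noise_sum_0 [simp]: "noise_sum j yf 0 = 0"
  by (simp add: noise_sum_def)

lemma noise_sum_step:
  "1 \<le> t \<Longrightarrow> noise_sum j yf t = noise_sum j yf (t - 1) + (g (w yf t \<bullet> \<theta>s) - yf i t) * w yf t $ j"
  unfolding noise_sum_def by (simp add: atLeastAtMostPlus1_int_conv[of 1 "t - 1", simplified] add.commute)

text \<open>Padding with zeros makes the history before time \<open>t\<close> range over a finite set.\<close>
definition past :: "int \<Rightarrow> (nat \<Rightarrow> int \<Rightarrow> real) \<Rightarrow> nat \<Rightarrow> int \<Rightarrow> real" where
  "past t yf = (\<lambda>j s. if j \<in> {1..d1} \<and> s \<in> {1 - int \<tau>..t - 1} then yf j s else 0)"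

lemma past_apply: "j \<in> {1..d1} \<Longrightarrow> 1 - int \<tau> \<le> s \<Longrightarrow> s < t \<Longrightarrow> past t yf j s = yf j s"
  by (simp add: past_def)

lemma w_past: "1 \<le> u \<Longrightarrow> u \<le> t \<Longrightarrow> w (past t yf) u = w yf u"
  by (rule wvec_cong[OF tau]) (auto simp: past_def)

lemma noise_sum_past: "t' < t \<Longrightarrow> noise_sum j (past t yf) t' = noise_sum j yf t'"
  unfolding noise_sum_def using i tau by (intro sum.cong refl) (auto simp: w_past past_apply)

lemma F_past: "F (past (int T + 1) yf) = F yf"
  unfolding FT_def using i tau
  by (intro ext arg_cong[where f = "\<lambda>x. _ *\<^sub>R x"] sum.cong refl) (auto simp: w_past past_apply)

lemma W_past: "W (past (int T + 1) yf) = W yf"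
  unfolding Wmat_def by (intro arg_cong[where f = "\<lambda>x. _ *\<^sub>R x"] sum.cong refl) (auto simp: w_past)

end

section \<open>Concentration of the empirical field at the true parameter\<close>

locale glm_process = glm d1 \<tau> T i ix \<theta>s \<Theta> g g' I mg + prob_space M
  for d1 \<tau> T i and ix :: "nat \<Rightarrow> 'n::finite" and \<theta>s \<Theta> g g' I mg and M :: "'a measure" +
  fixes y :: "nat \<Rightarrow> int \<Rightarrow> 'a \<Rightarrow> real"
  assumes y_meas: "\<forall>j t. y j t \<in> borel_measurable M"
    and y_binary: "\<forall>j\<in>{1..d1}. \<forall>t\<in>{1 - int \<tau>..int T}. \<forall>\<omega>\<in>space M. y j t \<omega> \<in> {0, 1}"
    and model: "\<forall>t\<in>{1..int T}. \<forall>h :: nat \<Rightarrow> int \<Rightarrow> real.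
        measure M {\<omega>\<in>space M. (\<forall>j'\<in>{1..d1}. \<forall>s\<in>{1 - int \<tau>..t - 1}. y j' s \<omega> = h j' s)
                              \<and> y i t \<omega> = 1}
        = g (wvec ix d1 \<tau> h t \<bullet> \<theta>s)
          * measure M {\<omega>\<in>space M. \<forall>j'\<in>{1..d1}. \<forall>s\<in>{1 - int \<tau>..t - 1}. y j' s \<omega> = h j' s}"
begin

lemma y_measurable [measurable]: "y j t \<in> borel_measurable M"
  using y_meas by blast

definition traj :: "'a \<Rightarrow> nat \<Rightarrow> int \<Rightarrow> real" where
  "traj \<omega> = (\<lambda>j s. y j s \<omega>)"

definition history :: "int \<Rightarrow> 'a \<Rightarrow> nat \<Rightarrow> int \<Rightarrow> real" where
  "history t \<omega> = past t (traj \<omega>)"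

lemma binary_traj: "\<omega> \<in> space M \<Longrightarrow> binary (traj \<omega>)"
  using y_binary by (auto simp: binary_def traj_def)

lemma w_history: "1 \<le> t \<Longrightarrow> w (history t \<omega>) t = w (traj \<omega>) t"
  by (simp add: history_def w_past)

lemma noise_sum_history: "t' < t \<Longrightarrow> noise_sum j (history t \<omega>) t' = noise_sum j (traj \<omega>) t'"
  by (simp add: history_def noise_sum_past)

lemma finite_history_range:
  assumes "t \<le> int T + 1"
  shows "finite (history t ` space M)"
proof -
  define D where "D = {1..d1} \<times> {1 - int \<tau>..t - 1}"
  let ?S = "{f. \<forall>x. (x \<in> D \<longrightarrow> f x \<in> {0 :: real, 1}) \<and> (x \<notin> D \<longrightarrow> f x = 0)}"
  have "finite ?S"
    by (rule finite_set_of_finite_funs) (auto simp: D_def)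
  moreover have "history t ` space M \<subseteq> (\<lambda>f j s. f (j, s)) ` ?S"
  proof
    fix h assume "h \<in> history t ` space M"
    then obtain \<omega> where \<omega>: "\<omega> \<in> space M" "h = history t \<omega>" by blast
    have "h = (\<lambda>f j s. f (j, s)) (case_prod h)"
      by simp
    moreover have "case_prod h \<in> ?S"
      using \<omega> y_binary assms by (auto simp: history_def past_def traj_def D_def)
    ultimately show "h \<in> (\<lambda>f j s. f (j, s)) ` ?S"
      by blast
  qed
  ultimately show ?thesis
    using finite_subset by blast
qed

lemma history_level_set:
  "{\<omega>\<in>space M. history t \<omega> = h}
     = (if \<forall>j s. \<not> (j \<in> {1..d1} \<and> s \<in> {1 - int \<tau>..t - 1}) \<longrightarrow> h j s = 0
        then {\<omega>\<in>space M. \<forall>j\<in>{1..d1}. \<forall>s\<in>{1 - int \<tau>..t - 1}. y j s \<omega> = h j s} else {})"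
  by (auto simp: history_def past_def traj_def fun_eq_iff split: if_splits)

lemma sets_history_level_set: "{\<omega>\<in>space M. history t \<omega> = h} \<in> sets M"
proof -
  have "{\<omega>\<in>space M. \<forall>j\<in>{1..d1}. \<forall>s\<in>{1 - int \<tau>..t - 1}. y j s \<omega> = h j s} \<in> sets M"
    by measurable
  thus ?thesis
    unfolding history_level_set by simp
qed

lemma history_level_set_in_range:
  "h \<in> history t ` space M \<Longrightarrow> {\<omega>\<in>space M. history t \<omega> = h}
     = {\<omega>\<in>space M. \<forall>j\<in>{1..d1}. \<forall>s\<in>{1 - int \<tau>..t - 1}. y j s \<omega> = h j s}"
  unfolding history_level_set by (auto simp: history_def past_def)

definition exp_noise :: "'n \<Rightarrow> real \<Rightarrow> int \<Rightarrow> 'a \<Rightarrow> real" where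
  "exp_noise j l t \<omega> = exp (l * noise_sum j (traj \<omega>) t)"

lemma integrable_exp_noise:
  assumes "t \<le> int T"
  shows "integrable M (exp_noise j l t)"
proof -
  have "integrable M (\<lambda>\<omega>. exp (l * noise_sum j (history (t + 1) \<omega>) t))"
    using assms finite_measure_axioms finite_history_range sets_history_level_set
    by (intro integrable_finite_range[where h = "history (t + 1)"]) auto
  thus ?thesis
    by (simp add: exp_noise_def[abs_def] noise_sum_history)
qed

lemma cell_bernoulli_parameters:
  assumes "t \<in> {1..int T}" "h \<in> history t ` space M"
  shows "0 \<le> g (w h t \<bullet> \<theta>s)" "g (w h t \<bullet> \<theta>s) \<le> 1" "w h t $ j \<in> {0, 1}"
proof -
  obtain \<omega> where \<omega>: "\<omega> \<in> space M" "h = history t \<omega>"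
    using assms(2) by blast
  hence wh: "w h t = w (traj \<omega>) t"
    using assms(1) by (simp add: w_history)
  show "0 \<le> g (w h t \<bullet> \<theta>s)" "g (w h t \<bullet> \<theta>s) \<le> 1"
    using g_range w_inner_in_I[OF binary_traj[OF \<omega>(1)] assms(1) theta_star] by (simp_all add: wh)
  show "w h t $ j \<in> {0, 1}"
    using w_component_binary[OF binary_traj[OF \<omega>(1)] assms(1)] by (simp add: wh)
qed

text \<open>On the cell where the history before \<open>t\<close> equals \<open>h\<close>, the new summand is
  \<open>(p - y\<^sub>t) c\<close> with \<open>y\<^sub>t\<close> Bernoulli of mean \<open>p\<close> by the model assumption.\<close>
lemma integral_exp_noise_cell:
  fixes j :: 'n
  assumes t: "t \<in> {1..int T}" and h: "h \<in> history t ` space M"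
  defines "p \<equiv> g (w h t \<bullet> \<theta>s)" and "c \<equiv> w h t $ j"
  shows "(LINT \<omega>|M. indicator {\<omega>\<in>space M. history t \<omega> = h} \<omega> * exp_noise j l t \<omega>)
    = (p * exp (l * ((p - 1) * c)) + (1 - p) * exp (l * (p * c)))
      * (LINT \<omega>|M. indicator {\<omega>\<in>space M. history t \<omega> = h} \<omega> * exp_noise j l (t - 1) \<omega>)"
proof -
  define A where "A = {\<omega>\<in>space M. history t \<omega> = h}"
  define B where "B = A \<inter> {\<omega>\<in>space M. y i t \<omega> = 1}"
  define E where "E = exp (l * noise_sum j h (t - 1))"
  define f0 where "f0 = exp (l * (p * c))"
  define f1 where "f1 = exp (l * ((p - 1) * c))"
  have A: "A \<in> sets M" and B: "B \<in> sets M"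
    unfolding A_def B_def using sets_history_level_set by measurable
  have A_eq: "A = {\<omega>\<in>space M. \<forall>j'\<in>{1..d1}. \<forall>s\<in>{1 - int \<tau>..t - 1}. y j' s \<omega> = h j' s}"
    unfolding A_def by (rule history_level_set_in_range[OF h])
  have "B = {\<omega>\<in>space M. (\<forall>j'\<in>{1..d1}. \<forall>s\<in>{1 - int \<tau>..t - 1}. y j' s \<omega> = h j' s)
                         \<and> y i t \<omega> = 1}"
    unfolding B_def A_eq by blast
  hence "measure M B = p * measure M A"
    using model t unfolding A_eq p_def by blast
  have on_cell: "exp_noise j l (t - 1) \<omega> = E"
    "exp_noise j l t \<omega> = E * (if y i t \<omega> = 1 then f1 else f0)" if "\<omega> \<in> A" for \<omega>
  proof -
    have \<omega>: "\<omega> \<in> space M" "h = history t \<omega>"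
      using that by (auto simp: A_def)
    have prev: "noise_sum j (traj \<omega>) (t - 1) = noise_sum j h (t - 1)"
      using \<omega>(2) by (simp add: noise_sum_history)
    thus "exp_noise j l (t - 1) \<omega> = E"
      by (simp add: exp_noise_def E_def)
    have "y i t \<omega> \<in> {0, 1}"
      using y_binary i t \<omega>(1) by auto
    moreover have "noise_sum j (traj \<omega>) t = noise_sum j h (t - 1) + (p - y i t \<omega>) * c"
      using noise_sum_step[of t j "traj \<omega>"] t prev w_history[of t \<omega>] \<omega>(2)
      by (simp add: p_def c_def traj_def)
    ultimately show "exp_noise j l t \<omega> = E * (if y i t \<omega> = 1 then f1 else f0)"
      by (auto simp: exp_noise_def E_def f0_def f1_def exp_add[symmetric] distrib_left)
  qed
  have "(LINT \<omega>|M. indicator A \<omega> * exp_noise j l t \<omega>)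
      = (LINT \<omega>|M. E * f0 * indicator A \<omega> + E * (f1 - f0) * indicator B \<omega>)"
    using on_cell(2) by (intro Bochner_Integration.integral_cong) (auto simp: B_def indicator_def algebra_simps)
  also have "\<dots> = E * f0 * measure M A + E * (f1 - f0) * measure M B"
    using A B by (simp add: emeasure_eq_measure)
  also have "\<dots> = (p * f1 + (1 - p) * f0) * (E * measure M A)"
    using \<open>measure M B = p * measure M A\<close> by (simp add: algebra_simps)
  also have "E * measure M A = (LINT \<omega>|M. E * indicator A \<omega>)"
    using A by (simp add: emeasure_eq_measure)
  also have "\<dots> = (LINT \<omega>|M. indicator A \<omega> * exp_noise j l (t - 1) \<omega>)"
    using on_cell(1) by (intro Bochner_Integration.integral_cong) (auto simp: indicator_def)
  finally show ?thesis
    unfolding A_def f0_def f1_def .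
qed

lemma integral_exp_noise_step:
  assumes t: "t \<in> {1..int T}"
  shows "integral\<^sup>L M (exp_noise j l t) \<le> exp (l\<^sup>2 / 8) * integral\<^sup>L M (exp_noise j l (t - 1))"
proof -
  let ?H = "history t ` space M"
  let ?cell = "\<lambda>h \<omega>. indicator {\<omega>\<in>space M. history t \<omega> = h} \<omega> :: real"
  have partition: "integral\<^sup>L M (exp_noise j l u) = (\<Sum>h\<in>?H. LINT \<omega>|M. ?cell h \<omega> * exp_noise j l u \<omega>)"
    if "u \<le> int T" for u
    using t that by (intro integral_finite_partition finite_history_range sets_history_level_set
        integrable_exp_noise) auto
  have "integral\<^sup>L M (exp_noise j l t)
      = (\<Sum>h\<in>?H. (g (w h t \<bullet> \<theta>s) * exp (l * ((g (w h t \<bullet> \<theta>s) - 1) * w h t $ j))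
            + (1 - g (w h t \<bullet> \<theta>s)) * exp (l * (g (w h t \<bullet> \<theta>s) * w h t $ j)))
          * (LINT \<omega>|M. ?cell h \<omega> * exp_noise j l (t - 1) \<omega>))"
    using t partition[of t] integral_exp_noise_cell[OF t] by (auto intro: sum.cong)
  also have "\<dots> \<le> (\<Sum>h\<in>?H. exp (l\<^sup>2 / 8) * (LINT \<omega>|M. ?cell h \<omega> * exp_noise j l (t - 1) \<omega>))"
    using cell_bernoulli_parameters[OF t]
    by (intro sum_mono mult_right_mono centred_bernoulli_mgf_le Bochner_Integration.integral_nonneg)
      (auto simp: exp_noise_def)
  also have "\<dots> = exp (l\<^sup>2 / 8) * integral\<^sup>L M (exp_noise j l (t - 1))"
    using t partition[of "t - 1"] by (simp add: sum_distrib_left)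
  finally show ?thesis .
qed

lemma integral_exp_noise_le:
  "n \<le> T \<Longrightarrow> integral\<^sup>L M (exp_noise j l (int n)) \<le> exp (real n * l\<^sup>2 / 8)"
proof (induction n)
  case 0
  then show ?case
    by (simp add: exp_noise_def prob_space)
next
  case (Suc n)
  have "integral\<^sup>L M (exp_noise j l (int (Suc n))) \<le> exp (l\<^sup>2 / 8) * integral\<^sup>L M (exp_noise j l (int n))"
    using Suc.prems integral_exp_noise_step[of "int (Suc n)"] by simp
  also have "\<dots> \<le> exp (l\<^sup>2 / 8) * exp (real n * l\<^sup>2 / 8)"
    using Suc by (intro mult_left_mono) auto
  also have "\<dots> = exp (real (Suc n) * l\<^sup>2 / 8)"
    by (simp add: exp_add[symmetric] algebra_simps)
  finally show ?case .
qed

lemma sets_traj_event: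
  assumes "\<And>yf. P (past (int T + 1) yf) = P yf"
  shows "{\<omega>\<in>space M. P (traj \<omega>)} \<in> sets M"
proof -
  have "{\<omega>\<in>space M. P (traj \<omega>)} = {\<omega>\<in>space M. P (history (int T + 1) \<omega>)}"
    by (simp add: history_def assms)
  also have "\<dots> \<in> sets M"
    by (rule sets_finite_range[OF finite_history_range sets_history_level_set]) simp
  finally show ?thesis .
qed

text \<open>Chernoff's bound with the optimal exponent \<open>l = 4 s\<close>.\<close>
lemma noise_sum_tail:
  assumes s: "s \<ge> 0" and \<sigma>: "\<sigma> \<in> {1, -1}"
  shows "measure M {\<omega>\<in>space M. real T * s \<le> \<sigma> * noise_sum j (traj \<omega>) (int T)}
    \<le> exp (- 2 * real T * s\<^sup>2)"
proof -
  define B where "B = {\<omega>\<in>space M. real T * s \<le> \<sigma> * noise_sum j (traj \<omega>) (int T)}"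
  define l where "l = 4 * s"
  have "B \<in> sets M"
    unfolding B_def using i tau
    by (intro sets_traj_event) (simp add: noise_sum_past)
  have "measure M B = integral\<^sup>L M (indicator B)"
    using \<open>B \<in> sets M\<close> by simp
  also have "\<dots> \<le> (LINT \<omega>|M. exp (- l * (real T * s)) * exp_noise j (\<sigma> * l) (int T) \<omega>)"
  proof (rule integral_mono)
    show "integrable M (indicator B :: 'a \<Rightarrow> real)"
      using \<open>B \<in> sets M\<close> by (intro integrable_real_indicator) (simp_all add: emeasure_eq_measure)
    show "integrable M (\<lambda>\<omega>. exp (- l * (real T * s)) * exp_noise j (\<sigma> * l) (int T) \<omega>)"
      by (intro integrable_mult_right integrable_exp_noise) simp
    fix \<omega>
    have "exp (- l * (real T * s)) * exp_noise j (\<sigma> * l) (int T) \<omega>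
        = exp (l * (\<sigma> * noise_sum j (traj \<omega>) (int T) - real T * s))"
      by (simp add: exp_noise_def exp_add[symmetric] algebra_simps)
    moreover have "\<omega> \<in> B \<Longrightarrow> 0 \<le> l * (\<sigma> * noise_sum j (traj \<omega>) (int T) - real T * s)"
      using s by (simp add: B_def l_def)
    ultimately show "indicator B \<omega> \<le> exp (- l * (real T * s)) * exp_noise j (\<sigma> * l) (int T) \<omega>"
      by (auto simp: indicator_def)
  qed
  also have "\<dots> \<le> exp (- l * (real T * s)) * exp (real T * (\<sigma> * l)\<^sup>2 / 8)"
    using integral_exp_noise_le[of T j "\<sigma> * l"] by simp
  also have "\<dots> = exp (- 2 * real T * s\<^sup>2)"
    using \<sigma> by (auto simp: l_def exp_add[symmetric] power2_eq_square algebra_simps)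
  finally show ?thesis
    unfolding B_def .
qed

text \<open>The union bound runs over the \<open>2 d\<close> events \<open>T s \<le> \<sigma> S\<^sub>j\<close>, \<open>\<sigma> = \<plusminus>1\<close>, each of
  probability at most \<open>exp (- 2 T s\<^sup>2) = (\<epsilon> / 2d)\<^sup>2\<close> for \<open>s = sqrt (ln (2d/\<epsilon>) / T)\<close>.\<close>
lemma F_true_param_small:
  assumes \<epsilon>: "0 < \<epsilon>" "\<epsilon> < 1"
  defines "d \<equiv> real (1 + \<tau> * d1)"
  shows "1 - \<epsilon> \<le> measure M {\<omega>\<in>space M. norm (F (traj \<omega>) \<theta>s) \<le> sqrt (d * ln (2 * d / \<epsilon>) / real T)}"
proof -
  define L where "L = ln (2 * d / \<epsilon>)"
  define s where "s = sqrt (L / real T)"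
  define K where "K = (UNIV :: 'n set) \<times> {1 :: real, -1}"
  define Bad where "Bad = (\<lambda>(j, \<sigma>). {\<omega>\<in>space M. real T * s \<le> \<sigma> * noise_sum j (traj \<omega>) (int T)})"
  define Good where "Good = {\<omega>\<in>space M. norm (F (traj \<omega>) \<theta>s) \<le> sqrt (d * L / real T)}"
  have T_pos: "real T > 0" and d: "d \<ge> 1"
    using T by (simp_all add: d_def)
  hence "L > 0"
    using \<epsilon> by (simp add: L_def field_simps)
  hence s: "s \<ge> 0" "real T * s\<^sup>2 = L" "sqrt (d * s\<^sup>2) = sqrt (d * L / real T)"
    using T_pos by (simp_all add: s_def)
  have Bad_sets: "Bad ` K \<subseteq> sets M"
    unfolding Bad_def using i tau by (auto intro!: sets_traj_event simp: noise_sum_past)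
  have "exp (- L) = \<epsilon> / (2 * d)"
    using \<epsilon> d by (simp add: L_def exp_minus)
  moreover have "exp (- 2 * real T * s\<^sup>2) = exp (- L) * exp (- L)"
    using s(2) by (simp add: exp_add[symmetric])
  ultimately have "exp (- 2 * real T * s\<^sup>2) = (\<epsilon> / (2 * d))\<^sup>2"
    by (simp add: power2_eq_square)
  also have "\<dots> \<le> \<epsilon> / (2 * d)"
    unfolding power2_eq_square using \<epsilon> d by (intro mult_left_le) (simp_all add: field_simps)
  finally have Bad_small: "measure M (Bad x) \<le> \<epsilon> / (2 * d)" if "x \<in> K" for x
    using that noise_sum_tail[OF s(1)] by (auto simp: K_def Bad_def intro: order_trans)
  have "measure M (\<Union>(Bad ` K)) \<le> (\<Sum>x\<in>K. measure M (Bad x))"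
    using Bad_sets by (intro finite_measure_subadditive_finite) (simp_all add: K_def)
  also have "\<dots> \<le> real (card K) * (\<epsilon> / (2 * d))"
    using sum_mono[OF Bad_small] by simp
  also have "real (card K) = 2 * d"
    by (simp add: K_def card_cartesian_product card_index_type d_def)
  also have "2 * d * (\<epsilon> / (2 * d)) = \<epsilon>"
    using d by simp
  finally have "1 - \<epsilon> \<le> measure M (space M - \<Union>(Bad ` K))"
    using prob_compl[OF sets.finite_UN[of K Bad]] Bad_sets by (auto simp: K_def)
  also have "\<dots> \<le> measure M Good"
  proof (rule finite_measure_mono)
    show "Good \<in> sets M"
      unfolding Good_def by (intro sets_traj_event) (simp add: F_past)
    show "space M - \<Union>(Bad ` K) \<subseteq> Good"
    proof
      fix \<omega> assume \<omega>: "\<omega> \<in> space M - \<Union>(Bad ` K)"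
      have "\<bar>F (traj \<omega>) \<theta>s $ j\<bar> \<le> s" for j
      proof -
        have "\<omega> \<notin> Bad (j, 1)" "\<omega> \<notin> Bad (j, -1)"
          using \<omega> by (auto simp: K_def)
        hence "\<bar>noise_sum j (traj \<omega>) (int T)\<bar> \<le> real T * s"
          using \<omega> by (auto simp: Bad_def)
        thus ?thesis
          using T_pos by (simp add: F_component pos_divide_le_eq mult.commute)
      qed
      hence "norm (F (traj \<omega>) \<theta>s) \<le> sqrt (d * s\<^sup>2)"
        using norm_le_sqrt_card_mult[of "F (traj \<omega>) \<theta>s" s] by (simp add: card_index_type d_def)
      thus "\<omega> \<in> Good"
        using \<omega> s(3) by (simp add: Good_def)
    qed
  qed
  finally show ?thesis
    unfolding Good_def L_def .
qed

lemma weak_VI_sol_error_bound: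
  assumes \<epsilon>: "0 < \<epsilon>" "\<epsilon> < 1"
  shows "1 - \<epsilon> \<le> measure M {\<omega>\<in>space M. \<forall>\<theta>h. weak_VI_sol (F (traj \<omega>)) \<Theta> \<theta>h \<longrightarrow>
        (let lam1 = min_eigenvalue (W (traj \<omega>));
             r = sqrt (real (1 + \<tau> * d1) * ln (2 * real (1 + \<tau> * d1) / \<epsilon>) / real T)
         in mg * lam1 * norm (\<theta>h - \<theta>s) \<le> r
            \<and> (lam1 > 0 \<longrightarrow> norm (\<theta>h - \<theta>s) \<le> r / (mg * lam1)))}"
    (is "_ \<le> measure M {\<omega>\<in>space M. ?event (traj \<omega>)}")
proof -
  define r where "r = sqrt (real (1 + \<tau> * d1) * ln (2 * real (1 + \<tau> * d1) / \<epsilon>) / real T)"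
  have "?event yf" if "binary yf" "norm (F yf \<theta>s) \<le> r" for yf
  proof (intro allI impI, unfold Let_def r_def[symmetric])
    fix \<theta>h assume sol: "weak_VI_sol (F yf) \<Theta> \<theta>h"
    have bound: "mg * min_eigenvalue (W yf) * norm (\<theta>h - \<theta>s) \<le> r"
      by (rule order_trans[OF weak_VI_sol_error_le[OF that(1) sol] that(2)])
    moreover have "0 < min_eigenvalue (W yf) \<longrightarrow> norm (\<theta>h - \<theta>s) \<le> r / (mg * min_eigenvalue (W yf))"
      using bound mg_pos by (auto simp: pos_le_divide_eq mult.commute mult.left_commute)
    ultimately show "mg * min_eigenvalue (W yf) * norm (\<theta>h - \<theta>s) \<le> r \<and>
        (0 < min_eigenvalue (W yf) \<longrightarrow> norm (\<theta>h - \<theta>s) \<le> r / (mg * min_eigenvalue (W yf)))" ..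
  qed
  hence "{\<omega>\<in>space M. norm (F (traj \<omega>) \<theta>s) \<le> r} \<subseteq> {\<omega>\<in>space M. ?event (traj \<omega>)}"
    using binary_traj by blast
  moreover have "{\<omega>\<in>space M. ?event (traj \<omega>)} \<in> sets M"
    by (intro sets_traj_event) (simp add: F_past W_past)
  ultimately have "measure M {\<omega>\<in>space M. norm (F (traj \<omega>) \<theta>s) \<le> r}
      \<le> measure M {\<omega>\<in>space M. ?event (traj \<omega>)}"
    by (rule finite_measure_mono)
  with F_true_param_small[OF \<epsilon>] show ?thesis
    unfolding r_def by linarith
qed

end

theorem theorem1:
  fixes M :: "'a measure"
    and d1 \<tau> T i :: nat
    and ix :: "nat \<Rightarrow> 'n::finite"
    and y :: "nat \<Rightarrow> int \<Rightarrow> 'a \<Rightarrow> real"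
    and \<theta>star :: "nat \<Rightarrow> real ^ 'n"
    and \<Theta> :: "(real ^ 'n) set"
    and g g' :: "real \<Rightarrow> real"
    and I :: "real set"
    and mg Mg :: real
  assumes d1: "d1 \<ge> 1" and tau: "\<tau> \<ge> 1" and T: "T \<ge> 1"
    and i: "i \<in> {1..d1}"
    and ix: "bij_betw ix {..<1 + \<tau> * d1} UNIV"
    and Theta_convex: "convex \<Theta>" and Theta_compact: "compact \<Theta>"
    and Theta_nonneg: "\<forall>\<theta>\<in>\<Theta>. \<forall>k. \<theta> $ k \<ge> 0"
    and theta_star: "\<theta>star i \<in> \<Theta>"
    and I_interval: "is_interval I"
    and g_range: "\<forall>x\<in>I. 0 \<le> g x \<and> g x \<le> 1"
    and g_in_I: "\<forall>\<theta>\<in>\<Theta>. \<forall>w. (w $ ix 0 = 1 \<and> (\<forall>k\<in>{1..<1 + \<tau> * d1}. w $ ix k \<in> {0, 1}))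
                    \<longrightarrow> w \<bullet> \<theta> \<in> I"
    and g_cont: "continuous_on I g"
    and g_mono: "mono_on I g"
    and g_deriv: "\<forall>x\<in>I. (g has_real_derivative g' x) (at x within I)"
    and mg_pos: "0 < mg"
    and g'_bounds: "\<forall>x\<in>I. mg \<le> g' x \<and> g' x \<le> Mg"
    and M: "prob_space M"
    and y_meas: "\<forall>j t. y j t \<in> borel_measurable M"
    and y_binary: "\<forall>j\<in>{1..d1}. \<forall>t\<in>{1 - int \<tau>..int T}. \<forall>\<omega>\<in>space M. y j t \<omega> \<in> {0, 1}"
    and init_fixed: "\<forall>j\<in>{1..d1}. \<forall>t\<in>{1 - int \<tau>..0}. \<exists>c. \<forall>\<omega>\<in>space M. y j t \<omega> = c"
    and model: "\<forall>j\<in>{1..d1}. \<forall>t\<in>{1..int T}. \<forall>h :: nat \<Rightarrow> int \<Rightarrow> real.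
        measure M {\<omega>\<in>space M. (\<forall>j'\<in>{1..d1}. \<forall>s\<in>{1 - int \<tau>..t - 1}. y j' s \<omega> = h j' s)
                              \<and> y j t \<omega> = 1}
        = g (wvec ix d1 \<tau> h t \<bullet> \<theta>star j)
          * measure M {\<omega>\<in>space M. \<forall>j'\<in>{1..d1}. \<forall>s\<in>{1 - int \<tau>..t - 1}. y j' s \<omega> = h j' s}"
  shows "\<forall>\<epsilon>::real. 0 < \<epsilon> \<and> \<epsilon> < 1 \<longrightarrow>
     measure M {\<omega>\<in>space M. \<forall>\<theta>h. weak_VI_sol (FT g ix d1 \<tau> T i (\<lambda>j t. y j t \<omega>)) \<Theta> \<theta>h \<longrightarrow>
        (let lam1 = min_eigenvalue (Wmat ix d1 \<tau> T (\<lambda>j t. y j t \<omega>));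
             r = sqrt (real (1 + \<tau> * d1) * ln (2 * real (1 + \<tau> * d1) / \<epsilon>) / real T)
         in mg * lam1 * norm (\<theta>h - \<theta>star i) \<le> r
            \<and> (lam1 > 0 \<longrightarrow> norm (\<theta>h - \<theta>star i) \<le> r / (mg * lam1)))}
     \<ge> 1 - \<epsilon>"
proof -
  have "glm_process d1 \<tau> T i ix (\<theta>star i) \<Theta> g g' I mg M y"
    unfolding glm_process_def glm_process_axioms_def glm_def using assms by auto
  then interpret glm_process d1 \<tau> T i ix "\<theta>star i" \<Theta> g g' I mg M y .
  show ?thesis
    by (intro allI impI weak_VI_sol_error_bound[unfolded traj_def]) auto
qed

end
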